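(* Let $y_1,y_2,y_3,y_4$ be the corners of the partially folded Miura parallelogram $y^\sigma_\omega(\Omega)$ (for some admissible $\omega\in[-\pi,\pi]$, $\sigma\in\{+,-\}$), and let $u_a=y_3-y_4$, $u_b=y_2-y_1$, $v_a=y_1-y_4$, $v_b=y_2-y_3$. Let $e\in\mathbb{S}^2$, $z\in\mathbb{R}^3$ with $z\cdot e=0$, $\theta_1,\theta_2\in(-\pi,\pi]$, $\tau_1,\tau_2\in\mathbb{R}$, let $R_\theta$ denote the right-hand rotation about $e$ by angle $\theta$, $P_e=I-e\otimes e$, and $g_i(x)=R_{\theta_i}(x-z)+\tau_i e+z$ ($i=1,2$). Then the conditions $$g_1(y_4)=y_1,\quad g_1(y_3)=y_2,\quad g_2(y_1)=y_2,\quad g_2(y_4)=y_3,\quad \theta_1=0,\quad\theta_2\neq0$$ hold if and only if $$\theta_1=0,\ \ u_a=u_b,\ \ \tau_2=u_a\cdot e,\ \ v_a=v_b,\ \ v_b=\tau_1e,\ \ (I-R_{\theta_2})z=P_e(y_2-R_{\theta_2}y_1),\ \ \theta_2\neq0.$$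
   Context: Setting. $\{e_1,e_2,e_3\}$ is the standard basis of $\mathbb{R}^3$. Fix $\eta\in(0,\pi)$, $l>0$; set $x_1=0$, $x_2=e_1$, $x_4=l(\cos\eta\,e_1+\sin\eta\,e_2)$, $x_3=x_2+x_4$, and let $\Omega$ be the planar parallelogram with these corners. Fix $\lambda_1,\lambda_2\in(0,1)$ with $(\lambda_2-1)\lambda_2l^2=(\lambda_1-1)\lambda_1$ and let $x_0=\lambda_1x_2+\lambda_2x_4$ (the interior crease vertex). Let $t_i=(x_i-x_0)/|x_i-x_0|$, $n_i=-(t_i\cdot e_2)e_1+(t_i\cdot e_1)e_2$, $\alpha=\arccos(t_1\cdot t_2)$, $\beta=\arccos(t_2\cdot t_3)$, and $R_i(\gamma)=t_i\otimes t_i+\cos\gamma(n_i\otimes n_i+e_3\otimes e_3)+\sin\gamma(e_3\otimes n_i-n_i\otimes e_3)$. Let $\mathcal{A}=\emptyset$ if $\alpha=\beta=\pi/2$, $\{-\}$ if $\alpha=\beta\ne\pi/2$, $\{+\}$ if $\alpha=\pi-\beta\neq\pi/2$, $\{+,-\}$ otherwise. For $\sigma\in\{+,-\}$ (identified with $\pm1$) and $\omega\in[-\pi,\pi]$ the folding angles are: if $\sigma\in\mathcal{A}$, $\gamma_1=-\sigma\bar\gamma_3^\sigma(\omega)$, $\gamma_2=\sigma\omega$, $\gamma_3=\bar\gamma_3^\sigma(\omega)$, $\gamma_4=\omega$ with $\bar\gamma_3^{\sigma}(\omega)=\mathrm{sign}((\cos\alpha-\sigma\cos\beta)\omega)\arccos\big(\frac{(\sigma1-\cos\alpha\cos\beta)\cos\omega+\sin\alpha\sin\beta}{(\sigma1-\cos\alpha\cos\beta)+\sin\alpha\sin\beta\cos\omega}\big)$;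 if $\sigma\notin\mathcal{A}$ (possible only for $\sigma=+,\alpha=\beta$ or $\sigma=-,\alpha=\pi-\beta$), $\gamma_1=\gamma_3=0,\gamma_2=\gamma_4=\omega$ when $\sigma=+$ and $\gamma_1=\gamma_3=\omega,\gamma_2=\gamma_4=0$ when $\sigma=-$. The folded parallelogram $y^\sigma_\omega(\Omega)$ is the piecewise-rigid image of $\Omega$ that is the identity on the triangle $\mathrm{conv}\{x_1,x_0,x_2\}$, equals $x\mapsto R_2(\gamma_2)(x-x_0)+x_0$ on $\mathrm{conv}\{x_2,x_0,x_3\}$, $x\mapsto R_2(\gamma_2)R_3(\gamma_3)(x-x_0)+x_0$ on $\mathrm{conv}\{x_3,x_0,x_4\}$ and $x\mapsto R_1(-\gamma_1)(x-x_0)+x_0$ on $\mathrm{conv}\{x_4,x_0,x_1\}$. Its corners are $y_1=x_1$, $y_2=x_2$, $y_3=x_0+R_2(\gamma_2)(x_3-x_0)$, $y_4=x_0+R_2(\gamma_2)R_3(\gamma_3)(x_4-x_0)$. *)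

theory Defs
  imports "HOL-Analysis.Analysis"
begin

definition e1 :: "real^3" where "e1 = vector [1, 0, 0]"
definition e2 :: "real^3" where "e2 = vector [0, 1, 0]"
definition e3 :: "real^3" where "e3 = vector [0, 0, 1]"

definition outer :: "real^3 \<Rightarrow> real^3 \<Rightarrow> real^3^3" where
  "outer a b = (\<chi> i j. a $ i * b $ j)"

definition skew :: "real^3 \<Rightarrow> real^3^3" where
  "skew e = vector [vector [0, - e$3, e$2], vector [e$3, 0, - e$1], vector [- e$2, e$1, 0]]"

text \<open>Right-hand rotation about the unit axis e by angle theta (Rodrigues formula).\<close>
definition rot :: "real^3 \<Rightarrow> real \<Rightarrow> real^3^3" where
  "rot e \<theta> = cos \<theta> *\<^sub>R mat 1 + sin \<theta> *\<^sub>R skew e + (1 - cos \<theta>) *\<^sub>R outer e e"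

definition proj_perp :: "real^3 \<Rightarrow> real^3^3" where
  "proj_perp e = mat 1 - outer e e"

text \<open>Reference points x_0 (crease vertex), x_1,...,x_4 (corners).\<close>
definition mx :: "real \<Rightarrow> real \<Rightarrow> real \<Rightarrow> real \<Rightarrow> nat \<Rightarrow> real^3" where
  "mx \<eta> l lam1 lam2 i =
     (let x2 = e1; x4 = l *\<^sub>R (cos \<eta> *\<^sub>R e1 + sin \<eta> *\<^sub>R e2) in
      if i = 0 then lam1 *\<^sub>R x2 + lam2 *\<^sub>R x4
      else if i = 1 then 0
      else if i = 2 then x2
      else if i = 3 then x2 + x4
      else x4)"

definition mt :: "real \<Rightarrow> real \<Rightarrow> real \<Rightarrow> real \<Rightarrow> nat \<Rightarrow> real^3" where
  "mt \<eta> l lam1 lam2 i =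
     (mx \<eta> l lam1 lam2 i - mx \<eta> l lam1 lam2 0) /\<^sub>R norm (mx \<eta> l lam1 lam2 i - mx \<eta> l lam1 lam2 0)"

definition mn :: "real \<Rightarrow> real \<Rightarrow> real \<Rightarrow> real \<Rightarrow> nat \<Rightarrow> real^3" where
  "mn \<eta> l lam1 lam2 i =
     (- (mt \<eta> l lam1 lam2 i \<bullet> e2)) *\<^sub>R e1 + (mt \<eta> l lam1 lam2 i \<bullet> e1) *\<^sub>R e2"

definition mR :: "real \<Rightarrow> real \<Rightarrow> real \<Rightarrow> real \<Rightarrow> nat \<Rightarrow> real \<Rightarrow> real^3^3" where
  "mR \<eta> l lam1 lam2 i \<gamma> =
     (let t = mt \<eta> l lam1 lam2 i; n = mn \<eta> l lam1 lam2 i in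
      outer t t + cos \<gamma> *\<^sub>R (outer n n + outer e3 e3) + sin \<gamma> *\<^sub>R (outer e3 n - outer n e3))"

definition malpha :: "real \<Rightarrow> real \<Rightarrow> real \<Rightarrow> real \<Rightarrow> real" where
  "malpha \<eta> l lam1 lam2 = arccos (mt \<eta> l lam1 lam2 1 \<bullet> mt \<eta> l lam1 lam2 2)"

definition mbeta :: "real \<Rightarrow> real \<Rightarrow> real \<Rightarrow> real \<Rightarrow> real" where
  "mbeta \<eta> l lam1 lam2 = arccos (mt \<eta> l lam1 lam2 2 \<bullet> mt \<eta> l lam1 lam2 3)"

text \<open>The set A of signs (+ = 1, - = -1).\<close>
definition Aset :: "real \<Rightarrow> real \<Rightarrow> real set" where
  "Aset \<alpha> \<beta> =
     (if \<alpha> = pi/2 \<and> \<beta> = pi/2 then {}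
      else if \<alpha> = \<beta> then {-1}
      else if \<alpha> = pi - \<beta> then {1}
      else {1, -1})"

definition gamma3bar :: "real \<Rightarrow> real \<Rightarrow> real \<Rightarrow> real \<Rightarrow> real" where
  "gamma3bar \<sigma> \<alpha> \<beta> \<omega> =
     sgn ((cos \<alpha> - \<sigma> * cos \<beta>) * \<omega>) *
     arccos (((\<sigma> - cos \<alpha> * cos \<beta>) * cos \<omega> + sin \<alpha> * sin \<beta>) /
             ((\<sigma> - cos \<alpha> * cos \<beta>) + sin \<alpha> * sin \<beta> * cos \<omega>))"

definition fold_angles :: "real \<Rightarrow> real \<Rightarrow> real \<Rightarrow> real \<Rightarrow> real \<Rightarrow> real \<Rightarrow> real \<times> real \<times> real \<times> real" where
  "fold_angles \<eta> l lam1 lam2 \<sigma> \<omega> =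
     (let \<alpha> = malpha \<eta> l lam1 lam2; \<beta> = mbeta \<eta> l lam1 lam2; g = gamma3bar \<sigma> \<alpha> \<beta> \<omega> in
      if \<sigma> \<in> Aset \<alpha> \<beta> then (- \<sigma> * g, \<sigma> * \<omega>, g, \<omega>)
      else if \<sigma> = 1 then (0, \<omega>, 0, \<omega>)
      else (\<omega>, 0, \<omega>, 0))"

definition my :: "real \<Rightarrow> real \<Rightarrow> real \<Rightarrow> real \<Rightarrow> real \<Rightarrow> real \<Rightarrow> nat \<Rightarrow> real^3" where
  "my \<eta> l lam1 lam2 \<sigma> \<omega> i =
     (let x = mx \<eta> l lam1 lam2; (\<gamma>1, \<gamma>2, \<gamma>3, \<gamma>4) = fold_angles \<eta> l lam1 lam2 \<sigma> \<omega>;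
          R = mR \<eta> l lam1 lam2 in
      if i = 1 then x 1
      else if i = 2 then x 2
      else if i = 3 then x 0 + R 2 \<gamma>2 *v (x 3 - x 0)
      else x 0 + (R 2 \<gamma>2 ** R 3 \<gamma>3) *v (x 4 - x 0))"

definition screw :: "real^3 \<Rightarrow> real^3 \<Rightarrow> real \<Rightarrow> real \<Rightarrow> real^3 \<Rightarrow> real^3" where
  "screw e z \<theta> \<tau> x = rot e \<theta> *v (x - z) + \<tau> *\<^sub>R e + z"

end

theory Submission
  imports Defs
begin

(* With theta1 = 0 the motion g1 is the translation by tau1 e, so its two
   conditions say exactly va = vb = tau1 e. A screw motion maps x to y iff its axial shift is the
   e-component of y - x and its axis position z solves the planar equation
   (I - R) z = P_e (y - R x); this turns g2(y1) = y2 into the conditions on tau2 and z. Since g2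
   commutes with translations along e, g2(y4) = g2(y1) - tau1 e = y3 then comes for free. *)

lemma outer_mult_vec: "outer a b *v v = (b \<bullet> v) *\<^sub>R a"
  unfolding outer_def
  by (simp add: vec_eq_iff matrix_vector_mult_def inner_vec_def sum_distrib_left algebra_simps)

lemma skew_mult_vec: "skew e *v v = cross3 e v"
  unfolding skew_def cross3_def
  by (simp add: vec_eq_iff forall_3 matrix_vector_mult_def sum_3)

lemma proj_perp_mult_vec: "proj_perp e *v v = v - (e \<bullet> v) *\<^sub>R e"
  unfolding proj_perp_def
  by (simp add: matrix_vector_mult_diff_rdistrib outer_mult_vec)

lemma rot_mult_vec:
  "rot e \<theta> *v v = cos \<theta> *\<^sub>R v + sin \<theta> *\<^sub>R cross3 e v + (1 - cos \<theta>) *\<^sub>R ((e \<bullet> v) *\<^sub>R e)"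
  unfolding rot_def
  by (simp add: matrix_vector_mult_add_rdistrib scaleR_matrix_vector_assoc[symmetric]
      skew_mult_vec outer_mult_vec)

lemma rot_zero: "rot e 0 = mat 1"
  unfolding rot_def by simp

lemma rot_axis:
  assumes "norm e = 1"
  shows "rot e \<theta> *v e = e"
proof -
  have "e \<bullet> e = 1" using assms by (simp add: norm_eq_1)
  then show ?thesis
    by (simp add: rot_mult_vec cross3_def vec_eq_iff algebra_simps)
qed

lemma inner_axis_rot:
  assumes "norm e = 1"
  shows "e \<bullet> (rot e \<theta> *v v) = e \<bullet> v"
proof -
  have "e \<bullet> e = 1" using assms by (simp add: norm_eq_1)
  then show ?thesis
    by (simp add: rot_mult_vec inner_add_right dot_cross_self algebra_simps)
qed

lemma screw_zero_angle: "screw e z 0 \<tau> x = x + \<tau> *\<^sub>R e"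
  unfolding screw_def rot_zero by simp

lemma screw_add_axis:
  assumes "norm e = 1"
  shows "screw e z \<theta> \<tau> (x + c *\<^sub>R e) = screw e z \<theta> \<tau> x + c *\<^sub>R e"
  using rot_axis[OF assms, of \<theta>]
  unfolding screw_def
  by (simp add: matrix_vector_right_distrib matrix_vector_mult_diff_distrib
      matrix_vector_mult_scaleR algebra_simps)

lemma screw_eq_iff:
  assumes "norm e = 1"
  shows "screw e z \<theta> \<tau> x = y \<longleftrightarrow>
    \<tau> = e \<bullet> (y - x) \<and> (mat 1 - rot e \<theta>) *v z = proj_perp e *v (y - rot e \<theta> *v x)"
proof -
  let ?R = "rot e \<theta>"
  have ee: "e \<bullet> e = 1" using assms by (simp add: norm_eq_1)
  have "screw e z \<theta> \<tau> x = y \<longleftrightarrow> (mat 1 - ?R) *v z = y - ?R *v x - \<tau> *\<^sub>R e"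
    unfolding screw_def
    by (auto simp: matrix_vector_mult_diff_rdistrib matrix_vector_mult_diff_distrib algebra_simps)
  moreover have "(mat 1 - ?R) *v z = y - ?R *v x - \<tau> *\<^sub>R e \<Longrightarrow> \<tau> = e \<bullet> (y - x)"
  proof -
    assume "(mat 1 - ?R) *v z = y - ?R *v x - \<tau> *\<^sub>R e"
    then have "e \<bullet> ((mat 1 - ?R) *v z) = e \<bullet> (y - ?R *v x - \<tau> *\<^sub>R e)" by simp
    then show ?thesis
      using ee by (simp add: matrix_vector_mult_diff_rdistrib inner_diff_right
          inner_axis_rot[OF assms])
  qed
  moreover have "y - ?R *v x - (e \<bullet> (y - x)) *\<^sub>R e = proj_perp e *v (y - ?R *v x)"
    by (simp add: proj_perp_mult_vec inner_diff_right inner_axis_rot[OF assms])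
  ultimately show ?thesis by metis
qed

lemma screw_pair_iff:
  fixes y1 y2 y3 y4 e z :: "real^3" and \<theta>1 \<theta>2 \<tau>1 \<tau>2 :: real
  assumes e: "norm e = 1"
  shows "(screw e z \<theta>1 \<tau>1 y4 = y1 \<and> screw e z \<theta>1 \<tau>1 y3 = y2 \<and> screw e z \<theta>2 \<tau>2 y1 = y2
            \<and> screw e z \<theta>2 \<tau>2 y4 = y3 \<and> \<theta>1 = 0 \<and> \<theta>2 \<noteq> 0)
     \<longleftrightarrow> (\<theta>1 = 0 \<and> y3 - y4 = y2 - y1 \<and> \<tau>2 = (y3 - y4) \<bullet> e \<and> y1 - y4 = y2 - y3
            \<and> y2 - y3 = \<tau>1 *\<^sub>R e
            \<and> (mat 1 - rot e \<theta>2) *v z = proj_perp e *v (y2 - rot e \<theta>2 *v y1) \<and> \<theta>2 \<noteq> 0)"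
    (is "?lhs \<longleftrightarrow> ?rhs")
proof (cases "\<theta>1 = 0")
  case True
  let ?g2 = "screw e z \<theta>2 \<tau>2"
  have g1: "screw e z \<theta>1 \<tau>1 y4 = y1 \<and> screw e z \<theta>1 \<tau>1 y3 = y2 \<longleftrightarrow>
      y1 - y4 = \<tau>1 *\<^sub>R e \<and> y2 - y3 = \<tau>1 *\<^sub>R e"
    unfolding True screw_zero_angle by (auto simp: algebra_simps)
  have g2_y4: "?g2 y4 = y3" if "y1 - y4 = \<tau>1 *\<^sub>R e" "y2 - y3 = \<tau>1 *\<^sub>R e" "?g2 y1 = y2"
  proof -
    have "?g2 y4 + \<tau>1 *\<^sub>R e = ?g2 (y4 + \<tau>1 *\<^sub>R e)" by (rule screw_add_axis[OF e, symmetric])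
    also have "\<dots> = y2" using that by (simp add: algebra_simps)
    finally show ?thesis using that(2) by (simp add: algebra_simps)
  qed
  have "(y3 - y4) \<bullet> e = e \<bullet> (y2 - y1)" if "y3 - y4 = y2 - y1"
    using that by (simp add: inner_commute)
  moreover have "y3 - y4 = y2 - y1" if "y1 - y4 = y2 - y3"
    using that by (simp add: algebra_simps)
  ultimately show ?thesis
    using True g1 g2_y4 screw_eq_iff[OF e, of z \<theta>2 \<tau>2 y1 y2] by metis
qed simp

theorem mainTheorem4:
  fixes \<eta> l lam1 lam2 \<sigma> \<omega> \<theta>1 \<theta>2 \<tau>1 \<tau>2 :: real and e z :: "real^3"
  assumes "0 < \<eta>" "\<eta> < pi" "0 < l"
    and "0 < lam1" "lam1 < 1" "0 < lam2" "lam2 < 1"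
    and "(lam2 - 1) * lam2 * l\<^sup>2 = (lam1 - 1) * lam1"
    and "\<sigma> \<in> {1, -1}" and "-pi \<le> \<omega>" "\<omega> \<le> pi"
    and "norm e = 1" and "z \<bullet> e = 0"
    and "-pi < \<theta>1" "\<theta>1 \<le> pi" "-pi < \<theta>2" "\<theta>2 \<le> pi"
  shows "(let y = my \<eta> l lam1 lam2 \<sigma> \<omega>;
              ua = y 3 - y 4; ub = y 2 - y 1; va = y 1 - y 4; vb = y 2 - y 3;
              g1 = screw e z \<theta>1 \<tau>1; g2 = screw e z \<theta>2 \<tau>2 in
          (g1 (y 4) = y 1 \<and> g1 (y 3) = y 2 \<and> g2 (y 1) = y 2 \<and> g2 (y 4) = y 3
            \<and> \<theta>1 = 0 \<and> \<theta>2 \<noteq> 0)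
          \<longleftrightarrow>
          (\<theta>1 = 0 \<and> ua = ub \<and> \<tau>2 = ua \<bullet> e \<and> va = vb \<and> vb = \<tau>1 *\<^sub>R e
            \<and> (mat 1 - rot e \<theta>2) *v z = proj_perp e *v (y 2 - rot e \<theta>2 *v y 1)
            \<and> \<theta>2 \<noteq> 0))"
  unfolding Let_def using screw_pair_iff[OF \<open>norm e = 1\<close>] .

end
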